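(* Fix $y>0$ and $0\le p_1'<p_1''\le y$, and suppose Assumptions 1 (with $U_0$ strictly increasing) and 2 hold. Suppose good 1 is chosen at the initial price, i.e. $q_1(p_1',y)>0$, and let $p^{10}$ be the (unique) price with $U_1(y-p^{10})=U_0(y)$. Let $\overline{p_1}$ be the minimum price $p_1\in[0,y]$ with $q_1(p_1,y)=0$. Then $\overline{p_1}\le p^{10}$. If in addition Assumption 3 holds, then $\overline{p_1}=p^{10}$.
   Context: Two goods, $0$ (price $0$) and $1$ (price $p_1\ge0$). All consumers have common income $y>0$, choose one good and spend the remainder on a numeraire. All consumers share utility functions $U_0:(0,\infty)\to[0,\infty)$ and $U_1:[0,\infty)\to[0,\infty)$ of the numeraire amount. Each consumer has an attention-price threshold $t\in(0,\infty]$, with population CDF $G$; a consumer considers good 1 at price $p_1$ iff $p_1<t$ (good 0 always considered) and chooses good 1 iff she considers it and $U_0(y)<U_1(y-p_1)$. Thus $q_{1}(p_{1},y)=\mathbb{1}\{U_{0}(y)<U_{1}(y-p_{1})\}\,(1-G(p_{1}))$ is the population choice probability of good 1. Assumption 1: (i) $U_0$ strictly increasing, $U_1$ continuous and strictly increasing; (ii) for every $y>0$ there is $\bar p_1\in[0,y]$ with $U_0(y)\ge U_1(y-\bar p_1)$. Assumption 2: $G(0)=0$. Assumption 3: $G(t)<1$ for all finite $t$. *)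

theory Defs
  imports "HOL-Probability.Probability"
begin

text \<open>Thresholds live in (0,\<infinity>],
  modelled as extended reals distributed according to a probability measure M;
  G t = Pr(threshold \<le> t) for finite t.\<close>
definition threshold_cdf :: "ereal measure \<Rightarrow> real \<Rightarrow> real" where
  "threshold_cdf M t = measure M {x. x \<le> ereal t}"

definition q1 :: "(real \<Rightarrow> real) \<Rightarrow> (real \<Rightarrow> real) \<Rightarrow> (real \<Rightarrow> real) \<Rightarrow> real \<Rightarrow> real \<Rightarrow> real" where
  "q1 U0 U1 G p y = (if U0 y < U1 (y - p) then 1 else 0) * (1 - G p)"

end

theory Submission
  imports Defs
begin

(* At p10 good 1 is not strictly preferred, so q1 vanishes there and minimality gives
   pbar <= p10. When G < 1 everywhere, q1 p = 0 forces U1 (y - p) <= U0 y = U1 (y - p10),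
   and strict monotonicity of U1 gives p10 <= p. *)

lemma q1_eq_0_if_not_preferred:
  assumes "U1 (y - p) \<le> U0 y"
  shows "q1 U0 U1 G p y = 0"
  using assms by (simp add: q1_def)

lemma q1_eq_0_iff_not_preferred:
  assumes "G p < 1"
  shows "q1 U0 U1 G p y = 0 \<longleftrightarrow> U1 (y - p) \<le> U0 y"
  using assms by (auto simp: q1_def not_less)

lemma indifference_price_le_if_q1_eq_0:
  fixes U1 :: "real \<Rightarrow> real"
  assumes U1_mono: "strict_mono_on {0..} U1"
    and "U1 (y - p10) = U0 y" "p10 \<le> y"
    and "p \<le> y" "G p < 1" "q1 U0 U1 G p y = 0"
  shows "p10 \<le> p"
proof -
  have "U1 (y - p) \<le> U1 (y - p10)"
    using assms q1_eq_0_iff_not_preferred by metis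
  then have "y - p \<le> y - p10"
    using strict_mono_on_less_eq [OF U1_mono] \<open>p \<le> y\<close> \<open>p10 \<le> y\<close> by simp
  then show ?thesis by simp
qed

theorem lemma2:
  fixes U0 U1 :: "real \<Rightarrow> real" and M :: "ereal measure"
    and y p1' p1'' p10 pbar :: real
  assumes M_prob: "prob_space M"
    and M_sets: "sets M = sets borel"
    and M_pos: "AE t in M. 0 < t"
    and U0_nonneg: "\<forall>x>0. 0 \<le> U0 x"
    and U1_nonneg: "\<forall>x\<ge>0. 0 \<le> U1 x"
    and A1_U0: "strict_mono_on {0<..} U0"
    and A1_U1_cont: "continuous_on {0..} U1"
    and A1_U1_mono: "strict_mono_on {0..} U1"
    and A1_ii: "\<forall>w>0. \<exists>pb\<in>{0..w}. U1 (w - pb) \<le> U0 w"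
    and A2: "threshold_cdf M 0 = 0"
    and y_pos: "0 < y"
    and prices: "0 \<le> p1'" "p1' < p1''" "p1'' \<le> y"
    and chosen: "q1 U0 U1 (threshold_cdf M) p1' y > 0"
    and p10: "p10 \<in> {0..y}" "U1 (y - p10) = U0 y"
    and pbar_mem: "pbar \<in> {0..y}" "q1 U0 U1 (threshold_cdf M) pbar y = 0"
    and pbar_min: "\<forall>p\<in>{0..y}. q1 U0 U1 (threshold_cdf M) p y = 0 \<longrightarrow> pbar \<le> p"
  shows "pbar \<le> p10 \<and>
         ((\<forall>t. threshold_cdf M t < 1) \<longrightarrow> pbar = p10)"
proof
  have "q1 U0 U1 (threshold_cdf M) p10 y = 0"
    using p10(2) by (simp add: q1_eq_0_if_not_preferred)
  with pbar_min p10(1) show pbar_le: "pbar \<le> p10" by blast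
  show "(\<forall>t. threshold_cdf M t < 1) \<longrightarrow> pbar = p10"
  proof
    assume "\<forall>t. threshold_cdf M t < 1"
    then have "p10 \<le> pbar"
      using indifference_price_le_if_q1_eq_0 [of U1 y p10 U0 pbar] A1_U1_mono p10 pbar_mem
      by auto
    with pbar_le show "pbar = p10" by simp
  qed
qed

end
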